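(* Let $S^1\subset\mathbb R^2$ be the unit circle, parametrized by $x(\theta)=(\cos\theta,\sin\theta)$. Define, for $m=x(\theta)\ne m'=x(\theta')$, \[ K_{1/2}(m,m')=1-\frac{1}{2\pi}\ln\big(2(1-\cos(\theta'-\theta))\big). \] Then there is no function $K:S^1\times S^1\to\mathbb R$ of positive type (i.e. symmetric positive semidefinite kernel: $\sum_{i,j}\alpha_i\alpha_jK(m_i,m_j)\ge0$ for all finite families) with $K(m,m')=K_{1/2}(m,m')$ for all $m\ne m'$.
   Context: Note $K_{1/2}$ is well defined and jointly continuous on $S^1\times S^1$ minus the diagonal $\{(m,m)\}$, and $K_{1/2}(m,m')\to+\infty$ as $m'\to m$. *)

theory Defs
  imports "HOL-Analysis.Analysis"
begin

definition circ :: "real \<Rightarrow> real \<times> real" where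
  "circ \<theta> = (cos \<theta>, sin \<theta>)"

definition K_half :: "real \<Rightarrow> real \<Rightarrow> real" where
  "K_half \<theta> \<theta>' = 1 - (1 / (2 * pi)) * ln (2 * (1 - cos (\<theta>' - \<theta>)))"

definition positive_type_on :: "'a set \<Rightarrow> ('a \<Rightarrow> 'a \<Rightarrow> real) \<Rightarrow> bool" where
  "positive_type_on S K \<longleftrightarrow>
     (\<forall>x\<in>S. \<forall>y\<in>S. K x y = K y x) \<and>
     (\<forall>(n::nat) (m::nat \<Rightarrow> 'a) (\<alpha>::nat \<Rightarrow> real). (\<forall>i<n. m i \<in> S) \<longrightarrow>
        0 \<le> (\<Sum>i<n. \<Sum>j<n. \<alpha> i * \<alpha> j * K (m i) (m j)))"

end

theory Submission
  imports Defs
begin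

text \<open>
  Positive type forces \<open>2 K(x,y) \<le> K(x,x) + K(y,y)\<close> (test the kernel against the family
  \<open>(x, y)\<close> with weights \<open>(1, -1)\<close>), so \<open>K\<close> is bounded on all pairs drawn from a sublevel
  set of its diagonal. The circle is uncountable while every diagonal value is finite, so some
  sublevel set \<open>{m. K(m,m) \<le> N}\<close> is infinite and, by compactness, contains distinct points
  arbitrarily close together. Off the diagonal \<open>K = 1 - ln |m - m'|\<^sup>2 / (2\<pi>)\<close>, which
  exceeds any bound for close enough points.
\<close>

lemma positive_type_on_two_points:
  assumes "positive_type_on S K" "x \<in> S" "y \<in> S"
  shows "2 * K x y \<le> K x x + K y y"
proof -
  define m :: "nat \<Rightarrow> 'a" where "m i = (if i = 0 then x else y)" for i
  define \<alpha> :: "nat \<Rightarrow> real" where "\<alpha> i = (if i = 0 then 1 else -1)" for i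
  have "0 \<le> (\<Sum>i<2. \<Sum>j<2. \<alpha> i * \<alpha> j * K (m i) (m j))"
    using assms unfolding positive_type_on_def m_def by auto
  also have "\<dots> = K x x + K y y - K x y - K y x"
    by (simp add: numeral_2_eq_2 m_def \<alpha>_def)
  also have "K y x = K x y"
    using assms unfolding positive_type_on_def by auto
  finally show ?thesis by simp
qed

lemma uncountable_imp_infinite_sublevel:
  fixes f :: "'a \<Rightarrow> real"
  assumes "uncountable S"
  shows "\<exists>N::nat. infinite {x \<in> S. f x \<le> real N}"
proof (rule ccontr)
  assume "\<not> ?thesis"
  then have "countable (\<Union>N::nat. {x \<in> S. f x \<le> real N})"
    by (auto intro: countable_finite)
  moreover have "S = (\<Union>N::nat. {x \<in> S. f x \<le> real N})"
    using real_nat_ceiling_ge by blast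
  ultimately show False
    using assms by simp
qed

lemma infinite_subset_compact_close_pair:
  fixes S :: "'a::metric_space set"
  assumes "compact S" "A \<subseteq> S" "infinite A" "e > 0"
  obtains x y where "x \<in> A" "y \<in> A" "x \<noteq> y" "dist x y < e"
proof -
  obtain z where "z islimpt A"
    using Heine_Borel_imp_Bolzano_Weierstrass assms(1-3) by blast
  then have "infinite (A \<inter> ball z (e / 2))"
    using assms(4) by (simp add: islimpt_eq_infinite_ball)
  then obtain x y where "x \<in> A \<inter> ball z (e / 2)" "y \<in> A \<inter> ball z (e / 2)" "x \<noteq> y"
    by (metis finite.emptyI infinite_remove ex_in_conv Diff_iff singletonI)
  moreover have "dist x y \<le> dist z x + dist z y"
    by (simp add: dist_triangle3)
  ultimately show ?thesis
    using that by auto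
qed

lemma circ_surj_sphere:
  assumes "m \<in> sphere (0::real \<times> real) 1"
  obtains t where "m = circ t"
proof -
  obtain a b where m: "m = (a, b)" by fastforce
  have "a\<^sup>2 + b\<^sup>2 = 1"
    using assms m by (simp add: norm_Pair)
  then obtain t where "a = cos t" "b = sin t"
    by (rule sincos_total_2pi)
  then show ?thesis
    using that m by (simp add: circ_def)
qed

lemma dist_circ_squared: "(dist (circ t) (circ s))\<^sup>2 = 2 * (1 - cos (s - t))"
proof -
  have "(dist (circ t) (circ s))\<^sup>2 = (cos t - cos s)\<^sup>2 + (sin t - sin s)\<^sup>2"
    by (simp add: circ_def dist_Pair_Pair dist_real_def)
  also have "\<dots> = (sin t ^ 2 + cos t ^ 2) + (sin s ^ 2 + cos s ^ 2)
                  - 2 * (cos s * cos t + sin s * sin t)"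
    by (simp add: power2_eq_square algebra_simps)
  also have "\<dots> = 2 * (1 - cos (s - t))"
    by (simp add: cos_diff)
  finally show ?thesis .
qed

lemma K_half_eq_log_dist: "K_half t s = 1 - (1 / (2 * pi)) * ln ((dist (circ t) (circ s))\<^sup>2)"
  by (simp add: K_half_def dist_circ_squared)

lemma log_kernel_gt:
  assumes "0 < d" "d < exp (- pi * c)"
  shows "c < 1 - (1 / (2 * pi)) * ln (d\<^sup>2)"
proof -
  have "ln d < - pi * c"
    using assms by (metis exp_less_cancel_iff exp_ln)
  then have "ln (d\<^sup>2) < - 2 * pi * c"
    using assms(1) by (simp add: ln_realpow)
  then have "c < - (1 / (2 * pi)) * ln (d\<^sup>2)"
    using pi_gt_zero by (simp add: field_simps)
  then show ?thesis
    by linarith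
qed

lemma uncountable_circle: "uncountable (sphere (0::real \<times> real) 1)"
proof (rule connected_uncountable)
  show "connected (sphere (0::real \<times> real) 1)"
    by (rule connected_sphere) simp
  show "(1::real, 0::real) \<in> sphere 0 1" "(-1::real, 0::real) \<in> sphere 0 1"
    by simp_all
qed simp

theorem mainTheorem6:
  shows "\<not> (\<exists>K :: real \<times> real \<Rightarrow> real \<times> real \<Rightarrow> real.
            positive_type_on (sphere (0::real \<times> real) 1) K \<and>
            (\<forall>\<theta> \<theta>'. circ \<theta> \<noteq> circ \<theta>' \<longrightarrow> K (circ \<theta>) (circ \<theta>') = K_half \<theta> \<theta>'))"
proof
  let ?S = "sphere (0::real \<times> real) 1"
  assume "\<exists>K. positive_type_on ?S K \<and>
            (\<forall>\<theta> \<theta>'. circ \<theta> \<noteq> circ \<theta>' \<longrightarrow> K (circ \<theta>) (circ \<theta>') = K_half \<theta> \<theta>')"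
  then obtain K where pos: "positive_type_on ?S K"
    and K_eq: "\<And>\<theta> \<theta>'. circ \<theta> \<noteq> circ \<theta>' \<Longrightarrow> K (circ \<theta>) (circ \<theta>') = K_half \<theta> \<theta>'"
    by blast
  obtain N :: nat where inf: "infinite {m \<in> ?S. K m m \<le> real N}"
    using uncountable_imp_infinite_sublevel[OF uncountable_circle, of "\<lambda>m. K m m"] by blast
  obtain x y where xy: "x \<in> {m \<in> ?S. K m m \<le> real N}" "y \<in> {m \<in> ?S. K m m \<le> real N}"
    "x \<noteq> y" "dist x y < exp (- pi * (real N + 1))"
    by (rule infinite_subset_compact_close_pair[OF compact_sphere[of 0 1] _ inf]) auto
  obtain t s where "x = circ t" "y = circ s"
    using xy(1,2) circ_surj_sphere by (metis (no_types, lifting) mem_Collect_eq)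
  then have "real N + 1 < K x y"
    using xy(3,4) K_eq[of t s] log_kernel_gt[of "dist x y" "real N + 1"]
    by (simp add: K_half_eq_log_dist)
  moreover have "2 * K x y \<le> K x x + K y y"
    using positive_type_on_two_points[OF pos] xy(1,2) by simp
  ultimately show False
    using xy(1,2) by simp
qed

end
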